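(* Let $p$ be an odd prime, let $n\ge 1$ and $0\le k\le n$, and let $\mathcal S\subseteq \mathbb Z_p^{2n}$ be an isotropic subspace of dimension $n-k$. Let $\hat\rho$ be any single-qudit density matrix on $\mathbb C^p$. Then the probability of successfully projecting $\hat\rho^{\otimes n}$ onto the trivial-syndrome codespace of $\mathcal S$ equals the complete weight enumerator of $\mathcal S^\perp$ evaluated at the entries of the Wigner function of $\hat\rho$: $$\operatorname{tr}\!\left(\hat\Pi^0_{\mathcal S}\,\hat\rho^{\otimes n}\right)=w\big(\mathcal S^\perp;\{W(\hat\rho;i,j)\}\big)=\sum_{(\vec u|\vec v)\in\mathcal S^\perp}\ \prod_{i=1}^n W(\hat\rho;u_i,v_i).$$
   Context: Let $p$ be an odd prime, $\omega=e^{2\pi i/p}$, and $2^{-1}$ the inverse of $2$ in $\mathbb Z_p$. On $\mathbb C^p$ with basis $\{|k\rangle\}_{k\in\mathbb Z_p}$ let $\hat X=\sum_k|k+1\rangle\langle k|$, $\hat Z=\sum_k\omega^k|k\rangle\langle k|$, and $\hat D(u,v)=\omega^{-2^{-1}uv}\hat X^u\hat Z^v$ for $u,v\in\mathbb Z_p$. For $\chi=(\vec u|\vec v)\in\mathbb Z_p^{2n}$ (with $\vec u,\vec v\in\mathbb Z_p^n$) let $\hat D(\chi)=\hat D(u_1,v_1)\otimes\cdots\otimes\hat D(u_n,v_n)$. The symplectic form is $[\chi,\chi']=\vec u\cdot\vec v'-\vec u'\cdot\vec v$. A subspace $\mathcal S\subseteq\mathbb Z_p^{2n}$ is isotropic if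 $[\chi,\chi']=0$ for all $\chi,\chi'\in\mathcal S$; it is identified with the stabilizer group $\{\hat D(\chi):\chi\in\mathcal S\}$. Define $\mathcal S^\perp=\{\chi\in\mathbb Z_p^{2n}:[\chi,\sigma]=0\ \forall\sigma\in\mathcal S\}$, and the trivial-syndrome projector $\hat\Pi^0_{\mathcal S}=p^{-(n-k)}\sum_{\chi\in\mathcal S}\hat D(\chi)$. Phase point operators: $\hat A(0,0)=p^{-1}\sum_{u,v\in\mathbb Z_p}\hat D(u,v)$, $\hat A(u,v)=\hat D(u,v)\hat A(0,0)\hat D(u,v)^\dagger$. The discrete Wigner function of a single-qudit state is $W(\hat\rho;u,v)=p^{-1}\operatorname{tr}(\hat\rho\hat A(u,v))$. For a subset $T\subseteq\mathbb Z_p^{2n}$ and numbers $\{y_{ij}\}_{i,j\in\mathbb Z_p}$, the complete weight enumerator is $w(T;\{y_{ij}\})=\sum_{(\vec u|\vec v)\in T}\prod_{i=1}^n y_{u_i,v_i}$. *)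

theory Defs
  imports Complex_Main "HOL-Computational_Algebra.Primes"
begin

text \<open>Elements of Z_p are represented by naturals in {0..<p}. A vector
chi = (u|v) in Z_p^{2n} is a list of length 2n whose first n entries are u
and last n entries are v.\<close>

definition zvecs :: "nat \<Rightarrow> nat \<Rightarrow> nat list set" where
  "zvecs p m = {x. length x = m \<and> set x \<subseteq> {..<p}}"

definition zadd :: "nat \<Rightarrow> nat list \<Rightarrow> nat list \<Rightarrow> nat list" where
  "zadd p x y = map2 (\<lambda>a b. (a + b) mod p) x y"

definition zscale :: "nat \<Rightarrow> nat \<Rightarrow> nat list \<Rightarrow> nat list" where
  "zscale p c x = map (\<lambda>a. (c * a) mod p) x"

definition zsubspace :: "nat \<Rightarrow> nat \<Rightarrow> nat list set \<Rightarrow> bool" where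
  "zsubspace p m S \<longleftrightarrow> S \<subseteq> zvecs p m \<and> replicate m 0 \<in> S \<and>
     (\<forall>x\<in>S. \<forall>y\<in>S. zadd p x y \<in> S) \<and> (\<forall>c<p. \<forall>x\<in>S. zscale p c x \<in> S)"

definition zlincomb :: "nat \<Rightarrow> nat \<Rightarrow> (nat \<Rightarrow> nat) \<Rightarrow> nat list list \<Rightarrow> nat list" where
  "zlincomb p m c bs = map (\<lambda>i. (\<Sum>j<length bs. c j * (bs ! j ! i)) mod p) [0..<m]"

definition zlin_indep :: "nat \<Rightarrow> nat \<Rightarrow> nat list list \<Rightarrow> bool" where
  "zlin_indep p m bs \<longleftrightarrow> (\<forall>c. (\<forall>j<length bs. c j < p) \<longrightarrow>
      zlincomb p m c bs = replicate m 0 \<longrightarrow> (\<forall>j<length bs. c j = 0))"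

definition zspan :: "nat \<Rightarrow> nat \<Rightarrow> nat list list \<Rightarrow> nat list set" where
  "zspan p m bs = {zlincomb p m c bs | c. \<forall>j<length bs. c j < p}"

definition zdim_eq :: "nat \<Rightarrow> nat \<Rightarrow> nat list set \<Rightarrow> nat \<Rightarrow> bool" where
  "zdim_eq p m S d \<longleftrightarrow> (\<exists>bs. length bs = d \<and> set bs \<subseteq> S \<and> zlin_indep p m bs \<and> S = zspan p m bs)"

definition sympl :: "nat \<Rightarrow> nat \<Rightarrow> nat list \<Rightarrow> nat list \<Rightarrow> int" where
  "sympl p n x y = (\<Sum>i<n. int (x ! i) * int (y ! (n + i)) - int (y ! i) * int (x ! (n + i))) mod int p"

definition isotropic :: "nat \<Rightarrow> nat \<Rightarrow> nat list set \<Rightarrow> bool" where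
  "isotropic p n S \<longleftrightarrow> zsubspace p (2 * n) S \<and> (\<forall>x\<in>S. \<forall>y\<in>S. sympl p n x y = 0)"

definition sympl_perp :: "nat \<Rightarrow> nat \<Rightarrow> nat list set \<Rightarrow> nat list set" where
  "sympl_perp p n S = {x \<in> zvecs p (2 * n). \<forall>s\<in>S. sympl p n x s = 0}"

type_synonym op = "nat \<Rightarrow> nat \<Rightarrow> complex"

definition omega :: "nat \<Rightarrow> complex" where
  "omega p = cis (2 * pi / real p)"

definition omega_pow :: "nat \<Rightarrow> int \<Rightarrow> complex" where
  "omega_pow p e = omega p ^ nat (e mod int p)"

text \<open>The inverse of 2 in Z_p (p odd).\<close>
definition inv2 :: "nat \<Rightarrow> nat" where
  "inv2 p = (p + 1) div 2"

definition mmul :: "nat \<Rightarrow> op \<Rightarrow> op \<Rightarrow> op" where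
  "mmul p A B = (\<lambda>a b. \<Sum>c<p. A a c * B c b)"

definition idop :: op where
  "idop = (\<lambda>a b. if a = b then 1 else 0)"

fun mpow :: "nat \<Rightarrow> op \<Rightarrow> nat \<Rightarrow> op" where
  "mpow p A 0 = idop"
| "mpow p A (Suc k) = mmul p A (mpow p A k)"

definition adj :: "op \<Rightarrow> op" where
  "adj A = (\<lambda>a b. cnj (A b a))"

definition mtrace :: "nat \<Rightarrow> op \<Rightarrow> complex" where
  "mtrace p A = (\<Sum>a<p. A a a)"

definition Xop :: "nat \<Rightarrow> op" where
  "Xop p = (\<lambda>a b. if a = (b + 1) mod p then 1 else 0)"

definition Zop :: "nat \<Rightarrow> op" where
  "Zop p = (\<lambda>a b. if a = b then omega p ^ a else 0)"

definition Dop :: "nat \<Rightarrow> nat \<Rightarrow> nat \<Rightarrow> op" where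
  "Dop p u v = (\<lambda>a b. omega_pow p (- int (inv2 p * u * v)) *
                       mmul p (mpow p (Xop p) u) (mpow p (Zop p) v) a b)"

definition A00 :: "nat \<Rightarrow> op" where
  "A00 p = (\<lambda>a b. (1 / of_nat p) * (\<Sum>u<p. \<Sum>v<p. Dop p u v a b))"

definition Aop :: "nat \<Rightarrow> nat \<Rightarrow> nat \<Rightarrow> op" where
  "Aop p u v = mmul p (mmul p (Dop p u v) (A00 p)) (adj (Dop p u v))"

definition wigner :: "nat \<Rightarrow> op \<Rightarrow> nat \<Rightarrow> nat \<Rightarrow> complex" where
  "wigner p \<rho> u v = (1 / of_nat p) * mtrace p (mmul p \<rho> (Aop p u v))"

definition density :: "nat \<Rightarrow> op \<Rightarrow> bool" where
  "density p \<rho> \<longleftrightarrow> (\<forall>a<p. \<forall>b<p. \<rho> a b = cnj (\<rho> b a)) \<and>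
     (\<forall>x :: nat \<Rightarrow> complex. 0 \<le> Re (\<Sum>a<p. \<Sum>b<p. cnj (x a) * \<rho> a b * x b)) \<and>
     mtrace p \<rho> = 1"

section \<open>n-qudit operators on (C^p)^{tensor n}, indexed by basis lists in zvecs p n\<close>

type_synonym nop = "nat list \<Rightarrow> nat list \<Rightarrow> complex"

definition Dn :: "nat \<Rightarrow> nat \<Rightarrow> nat list \<Rightarrow> nop" where
  "Dn p n \<chi> = (\<lambda>a b. \<Prod>i<n. Dop p (\<chi> ! i) (\<chi> ! (n + i)) (a ! i) (b ! i))"

definition tensor_power :: "nat \<Rightarrow> op \<Rightarrow> nop" where
  "tensor_power n \<rho> = (\<lambda>a b. \<Prod>i<n. \<rho> (a ! i) (b ! i))"

definition proj0 :: "nat \<Rightarrow> nat \<Rightarrow> nat \<Rightarrow> nat list set \<Rightarrow> nop" where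
  "proj0 p n k S = (\<lambda>a b. (1 / of_nat p ^ (n - k)) * (\<Sum>\<chi>\<in>S. Dn p n \<chi> a b))"

definition nmul :: "nat \<Rightarrow> nat \<Rightarrow> nop \<Rightarrow> nop \<Rightarrow> nop" where
  "nmul p n A B = (\<lambda>a b. \<Sum>c\<in>zvecs p n. A a c * B c b)"

definition ntrace :: "nat \<Rightarrow> nat \<Rightarrow> nop \<Rightarrow> complex" where
  "ntrace p n A = (\<Sum>a\<in>zvecs p n. A a a)"

definition weight_enum :: "nat \<Rightarrow> nat list set \<Rightarrow> (nat \<Rightarrow> nat \<Rightarrow> complex) \<Rightarrow> complex" where
  "weight_enum n T y = (\<Sum>\<chi>\<in>T. \<Prod>i<n. y (\<chi> ! i) (\<chi> ! (n + i)))"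

end

theory Submission
  imports Defs "HOL-Number_Theory.Cong" "HOL-Library.Real_Mod"
begin

text \<open>The projector is \<open>p^-(n-k)\<close> times the sum of the displacement operators \<open>D(\<chi>)\<close>,
  \<open>\<chi> \<in> S\<close>, and each \<open>D(\<chi>)\<close> is a tensor product, so the left-hand side is \<open>p^-(n-k)\<close> times
  the sum over \<open>S\<close> of products of the characteristic function \<open>tr(\<rho> D(a,b))\<close>. The relation
  \<open>D(u,v) D(a,b) D(u,v)\<^sup>\<dagger> = \<omega>^(va - ub) D(a,b)\<close> makes the Wigner function the symplectic
  Fourier transform of that characteristic function, and Poisson summation turns the sum over
  \<open>S\<^sup>\<perp>\<close> of products of Wigner values into \<open>|S|^-1\<close> times the sum over \<open>S\<close> of products of
  characteristic-function values. Both sides agree because \<open>|S| = p^(n-k)\<close>.\<close>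

definition ep :: "nat \<Rightarrow> int \<Rightarrow> complex" where
  "ep p t = cis (2 * pi * of_int t / of_nat p)"

lemma ep_add: "ep p (a + b) = ep p a * ep p b"
  by (simp add: ep_def cis_mult add_divide_distrib distrib_left)

lemma ep_0 [simp]: "ep p 0 = 1"
  by (simp add: ep_def)

lemma ep_sum: "ep p (\<Sum>i\<in>A. f i) = (\<Prod>i\<in>A. ep p (f i))"
  by (induction A rule: infinite_finite_induct) (simp_all add: ep_add)

lemma ep_cnj: "cnj (ep p t) = ep p (- t)"
  by (simp add: ep_def cis_cnj)

lemma ep_power: "ep p t ^ m = ep p (int m * t)"
  by (simp add: ep_def DeMoivre mult_ac)

lemma ep_periodic:
  assumes "p > 0" and "a = b + int p * k"
  shows "ep p a = ep p b"
proof -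
  have "2 * pi * of_int (int p * k) / of_nat p = 2 * pi * of_int k"
    using assms(1) by simp
  then have "ep p (int p * k) = 1"
    by (simp add: ep_def)
  then show ?thesis
    using assms(2) by (simp add: ep_add)
qed

lemma ep_mod: "p > 0 \<Longrightarrow> ep p (t mod int p) = ep p t"
  by (rule ep_periodic[where k = "- (t div int p)"]) (simp_all add: minus_mult_div_eq_mod)

lemma ep_eq_1_iff:
  assumes "p > 0"
  shows "ep p t = 1 \<longleftrightarrow> int p dvd t"
proof
  assume "ep p t = 1"
  then obtain k where "2 * pi * of_int t / of_nat p = of_int k * (2 * pi)"
    unfolding ep_def cis_eq_1_iff by blast
  then have "real_of_int t = real_of_int (k * int p)"
    using assms by (simp add: field_simps)
  then show "int p dvd t"
    by (simp only: of_int_eq_iff) simp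
next
  assume "int p dvd t"
  then obtain k where "t = int p * k"
    by blast
  then show "ep p t = 1"
    using ep_periodic[OF assms, of t 0 k] by simp
qed

lemma sum_ep_mult:
  assumes "p > 0"
  shows "(\<Sum>u<p. ep p (int u * c)) = (if int p dvd c then of_nat p else 0)"
proof -
  have "(\<Sum>u<p. ep p (int u * c)) = (\<Sum>u<p. ep p c ^ u)"
    by (simp add: ep_power)
  also have "\<dots> = (if int p dvd c then of_nat p else 0)"
  proof (cases "int p dvd c")
    case False
    then have "ep p c \<noteq> 1"
      using ep_eq_1_iff[OF assms] by blast
    moreover have "ep p c ^ p = 1"
      using ep_periodic[OF assms, of "int p * c" 0 c] by (simp add: ep_power)
    ultimately show ?thesis
      using False by (simp add: sum_gp_strict)
  qed (use assms ep_eq_1_iff[OF assms, of c] in simp)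
  finally show ?thesis .
qed

lemma omega_power_eq_ep: "omega p ^ m = ep p (int m)"
  by (simp add: omega_def ep_def DeMoivre mult_ac)

lemma omega_pow_eq_ep: "p > 0 \<Longrightarrow> omega_pow p t = ep p t"
  by (simp add: omega_pow_def omega_power_eq_ep ep_mod)

lemma int_mod_eq: "int (m mod p) = int m - int p * int (m div p)"
  by (metis add_diff_cancel_right' mod_mult_div_eq of_nat_add of_nat_mult)

lemma dvd_diff_of_nat_iff:
  assumes "a < p" and "b < p"
  shows "int p dvd (int a - int b) \<longleftrightarrow> a = b"
proof -
  have "int p dvd (int a - int b) \<longleftrightarrow> [a = b] (mod p)"
    by (simp add: cong_iff_dvd_diff [symmetric] cong_int_iff)
  then show ?thesis
    using cong_less_modulus_unique_nat[OF _ assms] by auto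
qed

lemma bij_betw_add_mod: "bij_betw (\<lambda>y. (y + u) mod p) {..<p} {..<p::nat}"
proof -
  have "inj_on (\<lambda>y. (y + u) mod p) {..<p}"
  proof (rule inj_onI)
    fix y y' :: nat
    assume "y \<in> {..<p}" "y' \<in> {..<p}" and "(y + u) mod p = (y' + u) mod p"
    then have "[y = y'] (mod p)" and "y < p" and "y' < p"
      by (simp_all add: cong_def [symmetric] cong_add_rcancel_nat)
    then show "y = y'"
      by (rule cong_less_modulus_unique_nat)
  qed
  moreover have "(\<lambda>y. (y + u) mod p) ` {..<p} \<subseteq> {..<p}"
    by auto
  ultimately show ?thesis
    by (simp add: bij_betw_def endo_inj_surj)
qed

lemma obtain_mod_add_preimage:
  fixes z p u :: nat
  assumes "z < p"
  obtains y0 where "y0 < p" and "\<And>y. y < p \<Longrightarrow> z = (y + u) mod p \<longleftrightarrow> y = y0"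
proof -
  have "z \<in> (\<lambda>y. (y + u) mod p) ` {..<p}"
    using assms bij_betw_add_mod[of u p] by (simp add: bij_betw_def)
  then obtain y0 where y0: "y0 < p" and z_eq: "z = (y0 + u) mod p"
    by blast
  have "z = (y + u) mod p \<longleftrightarrow> y = y0" if "y < p" for y
  proof
    assume "z = (y + u) mod p"
    then have "(y + u) mod p = (y0 + u) mod p"
      using z_eq by simp
    then show "y = y0"
      using inj_onD[OF bij_betw_imp_inj_on[OF bij_betw_add_mod[of u p]], of y y0] that y0 by simp
  qed (use z_eq in simp)
  with y0 show ?thesis
    using that by blast
qed

lemma mpow_Xop_entry:
  "b < p \<Longrightarrow> mpow p (Xop p) u a b = (if a = (b + u) mod p then 1 else 0)"
proof (induction u arbitrary: a)
  case (Suc k)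
  have "mpow p (Xop p) (Suc k) a b = (\<Sum>c<p. Xop p a c * (if c = (b + k) mod p then 1 else 0))"
    using Suc by (simp add: mmul_def)
  also have "\<dots> = Xop p a ((b + k) mod p)"
    using Suc.prems by (simp add: sum.delta' if_distrib cong: if_cong)
  also have "\<dots> = (if a = (b + Suc k) mod p then 1 else 0)"
    by (simp add: Xop_def mod_Suc_eq)
  finally show ?case .
qed (simp add: idop_def)

lemma mpow_Zop_entry:
  "a < p \<Longrightarrow> mpow p (Zop p) v a b = (if a = b then ep p (int a * int v) else 0)"
proof (induction v arbitrary: b)
  case (Suc k)
  have "mpow p (Zop p) (Suc k) a b = (\<Sum>c<p. Zop p a c * mpow p (Zop p) k c b)"
    by (simp add: mmul_def)
  also have "\<dots> = Zop p a a * mpow p (Zop p) k a b"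
    by (rule sum.mono_neutral_right[of "{..<p}" "{a}", simplified])
      (use Suc.prems in \<open>auto simp: Zop_def\<close>)
  also have "\<dots> = (if a = b then ep p (int a * int (Suc k)) else 0)"
    using Suc by (simp add: Zop_def omega_power_eq_ep ep_add [symmetric] algebra_simps)
  finally show ?case .
qed (simp add: idop_def)

lemma Dop_entry:
  assumes "p > 0" and "b < p"
  shows "Dop p u v a b =
    (if a = (b + u) mod p then ep p (int v * int b - int (inv2 p * u * v)) else 0)"
proof -
  have "mmul p (mpow p (Xop p) u) (mpow p (Zop p) v) a b
        = mpow p (Xop p) u a b * mpow p (Zop p) v b b"
    unfolding mmul_def
    by (rule sum.mono_neutral_right[of "{..<p}" "{b}", simplified])
      (use assms in \<open>auto simp: mpow_Zop_entry\<close>)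
  also have "\<dots> = (if a = (b + u) mod p then ep p (int b * int v) else 0)"
    using assms by (simp add: mpow_Xop_entry mpow_Zop_entry)
  finally show ?thesis
    using assms by (simp add: Dop_def omega_pow_eq_ep ep_add [symmetric] mult.commute)
qed

lemma mmul_Dop_Dop_entry:
  assumes p: "p > 0" and y: "y < p"
  shows "mmul p (Dop p u v) (Dop p a b) x y
    = Dop p u v x ((y + a) mod p) * ep p (int b * int y - int (inv2 p * a * b))"
proof -
  have "mmul p (Dop p u v) (Dop p a b) x y
      = Dop p u v x ((y + a) mod p) * Dop p a b ((y + a) mod p) y"
    unfolding mmul_def
    by (rule sum.mono_neutral_right[of "{..<p}" "{(y + a) mod p}", simplified])
      (use p y in \<open>auto simp: Dop_entry\<close>)
  then show ?thesis
    using p y by (simp add: Dop_entry)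
qed

lemma Dop_conj_entry:
  assumes p: "p > 0" and z: "z < p"
  shows "mmul p (mmul p (Dop p u v) (Dop p a b)) (adj (Dop p u v)) x z
    = ep p (int v * int a - int u * int b) * Dop p a b x z"
proof -
  obtain y0 where y0: "y0 < p" and only_y0: "\<And>y. y < p \<Longrightarrow> z = (y + u) mod p \<longleftrightarrow> y = y0"
    using obtain_mod_add_preimage[OF z, where u = u] by blast
  have z_eq: "z = (y0 + u) mod p"
    using only_y0[OF y0] by simp
  define h where "h = int (inv2 p * u * v)"
  define g where "g = int (inv2 p * a * b)"
  have "mmul p (mmul p (Dop p u v) (Dop p a b)) (adj (Dop p u v)) x z
      = (\<Sum>y<p. mmul p (Dop p u v) (Dop p a b) x y * cnj (Dop p u v z y))"
    by (simp add: mmul_def adj_def)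
  also have "\<dots> = mmul p (Dop p u v) (Dop p a b) x y0 * cnj (Dop p u v z y0)"
    by (rule sum.mono_neutral_right[of "{..<p}" "{y0}", simplified])
      (use p y0 only_y0 in \<open>auto simp: Dop_entry\<close>)
  also have "\<dots> = (if x = ((y0 + a) mod p + u) mod p then
        ep p (int v * int ((y0 + a) mod p) - h) * ep p (int b * int y0 - g) * ep p (- (int v * int y0 - h))
      else 0)"
    using p y0 z_eq by (simp add: mmul_Dop_Dop_entry Dop_entry ep_cnj h_def g_def)
  also have "\<dots> = (if x = (z + a) mod p then
        ep p (int v * int a - int u * int b) * ep p (int b * int z - g) else 0)"
  proof -
    have "((y0 + a) mod p + u) mod p = (z + a) mod p"
      using z_eq by (simp add: mod_simps add_ac)
    moreover have
      "ep p (int v * int ((y0 + a) mod p) - h) * ep p (int b * int y0 - g) * ep p (- (int v * int y0 - h))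
        = ep p (int v * int a - int u * int b) * ep p (int b * int z - g)"
      unfolding ep_add [symmetric] \<comment> \<open>\<open>k\<close> collects the carries of the two reductions mod \<open>p\<close>\<close>
      by (rule ep_periodic[OF p, where k = "int b * int ((y0 + u) div p) - int v * int ((y0 + a) div p)"])
        (simp add: z_eq int_mod_eq algebra_simps)
    ultimately show ?thesis
      by simp
  qed
  also have "\<dots> = ep p (int v * int a - int u * int b) * Dop p a b x z"
    using p z by (simp add: Dop_entry g_def)
  finally show ?thesis .
qed

lemma sum_rotate3:
  "(\<Sum>x\<in>A. \<Sum>y\<in>B. \<Sum>z\<in>C. f x y z) = (\<Sum>y\<in>B. \<Sum>z\<in>C. \<Sum>x\<in>A. f x y z)"
  by (subst sum.swap) (rule sum.cong[OF refl], rule sum.swap)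

lemma sum_swap_pairs:
  "(\<Sum>x\<in>A. \<Sum>y\<in>B. \<Sum>z\<in>C. \<Sum>w\<in>D. f x y z w) = (\<Sum>z\<in>C. \<Sum>w\<in>D. \<Sum>x\<in>A. \<Sum>y\<in>B. f x y z w)"
  by (rule trans[OF sum.cong[OF refl sum_rotate3] sum_rotate3])

lemma Aop_entry:
  assumes p: "p > 0" and z: "z < p"
  shows "Aop p u v x z
    = (1 / of_nat p) * (\<Sum>a<p. \<Sum>b<p. ep p (int v * int a - int u * int b) * Dop p a b x z)"
proof -
  have "Aop p u v x z = (\<Sum>y<p. \<Sum>c<p. \<Sum>a<p. \<Sum>b<p.
      (1 / of_nat p) * (Dop p u v x c * Dop p a b c y * cnj (Dop p u v z y)))"
    by (simp add: Aop_def mmul_def A00_def adj_def sum_distrib_left sum_distrib_right mult_ac)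
  also have "\<dots> = (1 / of_nat p) * (\<Sum>a<p. \<Sum>b<p.
      mmul p (mmul p (Dop p u v) (Dop p a b)) (adj (Dop p u v)) x z)"
    by (subst sum_swap_pairs) (simp add: mmul_def adj_def sum_distrib_left sum_distrib_right mult_ac)
  finally show ?thesis
    using Dop_conj_entry[OF p z] by simp
qed

definition char_fun :: "nat \<Rightarrow> op \<Rightarrow> nat \<Rightarrow> nat \<Rightarrow> complex" where
  "char_fun p \<rho> a b = mtrace p (mmul p \<rho> (Dop p a b))"

lemma wigner_eq_sum_char_fun:
  assumes p: "p > 0"
  shows "wigner p \<rho> u v
    = (1 / of_nat p ^ 2) * (\<Sum>a<p. \<Sum>b<p. ep p (int v * int a - int u * int b) * char_fun p \<rho> a b)"
proof -
  have "wigner p \<rho> u v = (\<Sum>x<p. \<Sum>c<p. \<Sum>a<p. \<Sum>b<p.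
      (1 / of_nat p ^ 2) * (ep p (int v * int a - int u * int b) * (\<rho> x c * Dop p a b c x)))"
    using p by (simp add: wigner_def mtrace_def mmul_def Aop_entry sum_distrib_left
        sum_distrib_right mult_ac power2_eq_square)
  also have "\<dots> = (1 / of_nat p ^ 2) *
      (\<Sum>a<p. \<Sum>b<p. ep p (int v * int a - int u * int b) * char_fun p \<rho> a b)"
    by (subst sum_swap_pairs)
      (simp add: char_fun_def mtrace_def mmul_def sum_distrib_left sum_distrib_right mult_ac)
  finally show ?thesis .
qed

lemma sum_ep_wigner:
  assumes p: "p > 0" and a0: "a0 < p" and b0: "b0 < p"
  shows "(\<Sum>u<p. \<Sum>v<p. ep p (int u * int b0 - int a0 * int v) * wigner p \<rho> u v)
    = char_fun p \<rho> a0 b0"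
proof -
  have phase: "ep p (int u * int b0 - int a0 * int v) * ep p (int v * int a - int u * int b)
      = ep p (int u * (int b0 - int b)) * ep p (int v * (int a - int a0))" for u v a b
    unfolding ep_add [symmetric] by (simp add: algebra_simps)
  have orth: "(\<Sum>u<p. ep p (int u * (int a - int b))) = (if a = b then of_nat p else 0)"
    if "a < p" "b < p" for a b
    using that by (simp add: sum_ep_mult[OF p] dvd_diff_of_nat_iff)
  have "(\<Sum>u<p. \<Sum>v<p. ep p (int u * int b0 - int a0 * int v) * wigner p \<rho> u v)
      = (\<Sum>u<p. \<Sum>v<p. \<Sum>a<p. \<Sum>b<p. (1 / of_nat p ^ 2) * char_fun p \<rho> a b *
          (ep p (int u * (int b0 - int b)) * ep p (int v * (int a - int a0))))"
    using p by (simp add: wigner_eq_sum_char_fun phase [symmetric] sum_distrib_left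
        sum_distrib_right mult_ac)
  also have "\<dots> = (\<Sum>a<p. \<Sum>b<p. (1 / of_nat p ^ 2) * char_fun p \<rho> a b *
          ((\<Sum>u<p. ep p (int u * (int b0 - int b))) * (\<Sum>v<p. ep p (int v * (int a - int a0)))))"
    by (subst sum_swap_pairs) (simp add: sum_distrib_left sum_distrib_right mult_ac)
  also have "\<dots> = (\<Sum>a<p. \<Sum>b<p. (1 / of_nat p ^ 2) * char_fun p \<rho> a b *
          ((if b0 = b then of_nat p else 0) * (if a = a0 then of_nat p else 0)))"
    using a0 b0 by (intro sum.cong refl) (simp add: orth)
  also have "\<dots> = (\<Sum>a<p. \<Sum>b<p. if a = a0 then if b = b0 then char_fun p \<rho> a b else 0 else 0)"
    using p by (intro sum.cong refl) (auto simp: power2_eq_square)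
  also have "\<dots> = (\<Sum>a<p. if a = a0 then \<Sum>b<p. if b = b0 then char_fun p \<rho> a b else 0 else 0)"
    by (rule sum.cong) auto
  also have "\<dots> = char_fun p \<rho> a0 b0"
    using a0 b0 by simp
  finally show ?thesis .
qed

lemma zvecs_eq_lists: "zvecs p m = {xs. set xs \<subseteq> {..<p} \<and> length xs = m}"
  by (auto simp: zvecs_def)

lemma finite_zvecs: "finite (zvecs p m)"
  by (simp add: zvecs_eq_lists finite_lists_length_eq)

lemma card_zvecs: "card (zvecs p m) = p ^ m"
  by (simp add: zvecs_eq_lists card_lists_length_eq)

lemma nth_zvecs:
  assumes "x \<in> zvecs p m" and "i < m"
  shows "x ! i < p"
proof -
  have "x ! i \<in> set x"
    using assms by (simp add: zvecs_def)
  then show ?thesis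
    using assms(1) by (auto simp: zvecs_def)
qed

lemma zvecs_Suc: "zvecs p (Suc m) = (\<lambda>(xs, t). xs @ [t]) ` (zvecs p m \<times> {..<p})"
proof
  show "zvecs p (Suc m) \<subseteq> (\<lambda>(xs, t). xs @ [t]) ` (zvecs p m \<times> {..<p})"
  proof
    fix x assume x: "x \<in> zvecs p (Suc m)"
    then have "x \<noteq> []"
      by (auto simp: zvecs_def)
    then have "x = butlast x @ [last x]"
      by simp
    moreover have "butlast x \<in> zvecs p m"
      using x by (auto simp: zvecs_def dest: in_set_butlastD)
    moreover have "last x < p"
      using x last_in_set[OF \<open>x \<noteq> []\<close>] by (auto simp: zvecs_def)
    ultimately show "x \<in> (\<lambda>(xs, t). xs @ [t]) ` (zvecs p m \<times> {..<p})"
      by (intro image_eqI[where x = "(butlast x, last x)"]) simp_all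
  qed
qed (auto simp: zvecs_def)

lemma sum_zvecs_prod:
  "(\<Sum>x\<in>zvecs p m. \<Prod>i<m. f i (x ! i)) = (\<Prod>i<m. \<Sum>t<p. (f i t :: 'a :: comm_semiring_1))"
proof (induction m)
  case 0
  have "zvecs p 0 = {[]}"
    by (auto simp: zvecs_def)
  then show ?case
    by simp
next
  case (Suc m)
  have inj: "inj_on (\<lambda>(xs, t). xs @ [t]) (zvecs p m \<times> {..<p})"
    by (rule inj_onI) clarsimp
  have "(\<Sum>x\<in>zvecs p (Suc m). \<Prod>i<Suc m. f i (x ! i))
      = (\<Sum>(xs, t)\<in>zvecs p m \<times> {..<p}. (\<Prod>i<m. f i (xs ! i)) * f m t)"
    unfolding zvecs_Suc sum.reindex[OF inj]
    by (intro sum.cong refl) (auto simp: zvecs_def nth_append)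
  also have "\<dots> = (\<Sum>x\<in>zvecs p m. \<Prod>i<m. f i (x ! i)) * (\<Sum>t<p. f m t)"
    by (simp add: sum_product sum.cartesian_product)
  finally show ?case
    using Suc by simp
qed

lemma sum_zvecs_prod2:
  "(\<Sum>x\<in>zvecs p m. \<Sum>y\<in>zvecs p m. \<Prod>i<m. f i (x ! i) (y ! i))
    = (\<Prod>i<m. \<Sum>a<p. \<Sum>b<p. (f i a b :: 'a :: comm_semiring_1))"
proof -
  have "(\<Sum>x\<in>zvecs p m. \<Sum>y\<in>zvecs p m. \<Prod>i<m. f i (x ! i) (y ! i))
      = (\<Sum>x\<in>zvecs p m. \<Prod>i<m. \<Sum>b<p. f i (x ! i) b)"
    by (rule sum.cong[OF refl]) (rule sum_zvecs_prod)
  also have "\<dots> = (\<Prod>i<m. \<Sum>a<p. \<Sum>b<p. f i a b)"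
    by (rule sum_zvecs_prod)
  finally show ?thesis .
qed

lemma sum_zvecs_double:
  "(\<Sum>x\<in>zvecs p (2 * m). f x) = (\<Sum>u\<in>zvecs p m. \<Sum>v\<in>zvecs p m. f (u @ v))"
proof -
  have img: "zvecs p (2 * m) = (\<lambda>(u, v). u @ v) ` (zvecs p m \<times> zvecs p m)"
  proof
    show "zvecs p (2 * m) \<subseteq> (\<lambda>(u, v). u @ v) ` (zvecs p m \<times> zvecs p m)"
    proof
      fix x assume x: "x \<in> zvecs p (2 * m)"
      have "take m x \<in> zvecs p m" "drop m x \<in> zvecs p m"
        using x by (auto simp: zvecs_def dest: in_set_takeD in_set_dropD)
      then show "x \<in> (\<lambda>(u, v). u @ v) ` (zvecs p m \<times> zvecs p m)"
        by (intro image_eqI[where x = "(take m x, drop m x)"]) simp_all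
    qed
  qed (auto simp: zvecs_def)
  have "inj_on (\<lambda>(u, v). u @ v) (zvecs p m \<times> zvecs p m)"
  proof (rule inj_onI, clarify)
    fix u v u' v' assume "u \<in> zvecs p m" "u' \<in> zvecs p m" and "u @ v = u' @ v'"
    then show "u = u' \<and> v = v'"
      by (simp add: zvecs_def)
  qed
  then show ?thesis
    unfolding img by (simp add: sum.reindex sum.cartesian_product case_prod_unfold)
qed

lemma ep_sympl:
  "p > 0 \<Longrightarrow> ep p (sympl p n x s)
    = (\<Prod>i<n. ep p (int (x ! i) * int (s ! (n + i)) - int (s ! i) * int (x ! (n + i))))"
  by (simp add: sympl_def ep_mod ep_sum)

lemma ep_bilinear_add_mod:
  assumes p: "p > 0"
  shows "ep p (int x * int ((a + b) mod p) - int ((c + d) mod p) * int y)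
    = ep p (int x * int a - int c * int y) * ep p (int x * int b - int d * int y)"
  unfolding ep_add [symmetric]
  by (rule ep_periodic[OF p, where k = "int ((c + d) div p) * int y - int x * int ((a + b) div p)"])
    (simp add: int_mod_eq algebra_simps)

lemma ep_sympl_zadd:
  "p > 0 \<Longrightarrow> length s = 2 * n \<Longrightarrow> length s' = 2 * n \<Longrightarrow>
    ep p (sympl p n x (zadd p s s')) = ep p (sympl p n x s) * ep p (sympl p n x s')"
  unfolding ep_sympl prod.distrib [symmetric]
  by (intro prod.cong refl) (simp add: zadd_def ep_bilinear_add_mod)

lemma inj_on_zadd: "length s = m \<Longrightarrow> inj_on (zadd p s) (zvecs p m)"
proof (rule inj_onI)
  fix x y assume s: "length s = m" and x: "x \<in> zvecs p m" and y: "y \<in> zvecs p m"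
    and eq: "zadd p s x = zadd p s y"
  show "x = y"
  proof (rule nth_equalityI)
    show "length x = length y"
      using x y by (simp add: zvecs_def)
    fix i assume "i < length x"
    then have i: "i < m"
      using x by (simp add: zvecs_def)
    have "(x ! i + s ! i) mod p = (y ! i + s ! i) mod p"
      using arg_cong[OF eq, of "\<lambda>z. z ! i"] i s x y by (simp add: zadd_def zvecs_def add.commute)
    then have "[x ! i = y ! i] (mod p)"
      by (simp add: cong_def [symmetric] cong_add_rcancel_nat)
    then show "x ! i = y ! i"
      using cong_less_modulus_unique_nat nth_zvecs[OF x i] nth_zvecs[OF y i] by blast
  qed
qed

text \<open>Orthogonality of characters: translation by a vector \<open>s\<^sub>0 \<in> S\<close> with
  \<open>[x, s\<^sub>0] \<noteq> 0\<close> multiplies the sum by a nontrivial root of unity.\<close>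

lemma sum_ep_sympl_subspace:
  assumes p: "p > 0" and S: "zsubspace p (2 * n) S"
  shows "(\<Sum>s\<in>S. ep p (sympl p n x s))
    = (if \<forall>s\<in>S. sympl p n x s = 0 then of_nat (card S) else 0)"
proof (cases "\<forall>s\<in>S. sympl p n x s = 0")
  case False
  then obtain s0 where s0: "s0 \<in> S" and nonzero: "sympl p n x s0 \<noteq> 0"
    by blast
  have SZ: "S \<subseteq> zvecs p (2 * n)"
    using S by (simp add: zsubspace_def)
  have len: "length s = 2 * n" if "s \<in> S" for s
    using that SZ by (auto simp: zvecs_def)
  have "0 \<le> sympl p n x s0" "sympl p n x s0 < int p"
    using p by (simp_all add: sympl_def)
  then have "\<not> int p dvd sympl p n x s0"
    using nonzero zdvd_imp_le by fastforce
  then have ne1: "ep p (sympl p n x s0) \<noteq> 1"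
    using ep_eq_1_iff[OF p] by blast
  have inj: "inj_on (zadd p s0) S"
    using inj_on_zadd[OF len[OF s0]] SZ inj_on_subset by blast
  have "zadd p s0 ` S = S"
    by (rule endo_inj_surj[OF finite_subset[OF SZ finite_zvecs] _ inj])
      (use S s0 in \<open>auto simp: zsubspace_def\<close>)
  then have "(\<Sum>s\<in>S. ep p (sympl p n x s)) = (\<Sum>s\<in>S. ep p (sympl p n x (zadd p s0 s)))"
    using sum.reindex[OF inj, of "\<lambda>s. ep p (sympl p n x s)"] by simp
  also have "\<dots> = ep p (sympl p n x s0) * (\<Sum>s\<in>S. ep p (sympl p n x s))"
    by (simp add: sum_distrib_left ep_sympl_zadd[OF p len[OF s0] len])
  finally have "(1 - ep p (sympl p n x s0)) * (\<Sum>s\<in>S. ep p (sympl p n x s)) = 0"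
    by (simp add: algebra_simps)
  then have "(\<Sum>s\<in>S. ep p (sympl p n x s)) = 0"
    using ne1 by simp
  then show ?thesis
    using False by (simp only: if_not_P if_False)
next
  case True
  then have "(\<Sum>s\<in>S. ep p (sympl p n x s)) = (\<Sum>s\<in>S. 1)"
    by (intro sum.cong refl) simp
  then show ?thesis
    using True by simp
qed

lemma zspan_eq_image:
  "zspan p m bs = (\<lambda>cs. zlincomb p m ((!) cs) bs) ` zvecs p (length bs)"
proof
  show "zspan p m bs \<subseteq> (\<lambda>cs. zlincomb p m ((!) cs) bs) ` zvecs p (length bs)"
  proof
    fix x assume "x \<in> zspan p m bs"
    then obtain c where c: "\<forall>j<length bs. c j < p" and x: "x = zlincomb p m c bs"
      by (auto simp: zspan_def)
    have "map c [0..<length bs] \<in> zvecs p (length bs)"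
      using c by (auto simp: zvecs_def)
    moreover have "x = zlincomb p m ((!) (map c [0..<length bs])) bs"
      unfolding x zlincomb_def by (intro map_cong refl arg_cong2[where f = "(mod)"] sum.cong) auto
    ultimately show "x \<in> (\<lambda>cs. zlincomb p m ((!) cs) bs) ` zvecs p (length bs)"
      by blast
  qed
next
  show "(\<lambda>cs. zlincomb p m ((!) cs) bs) ` zvecs p (length bs) \<subseteq> zspan p m bs"
  proof (rule image_subsetI)
    fix cs assume "cs \<in> zvecs p (length bs)"
    then show "zlincomb p m ((!) cs) bs \<in> zspan p m bs"
      unfolding zspan_def using nth_zvecs by blast
  qed
qed

lemma zlincomb_eq_0_if_coeffs_diff:
  assumes eq: "zlincomb p m c bs = zlincomb p m c' bs"
    and e_cong: "\<And>j. j < length bs \<Longrightarrow> [e j + c' j = c j] (mod p)"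
  shows "zlincomb p m e bs = replicate m 0"
proof (rule nth_equalityI)
  show "length (zlincomb p m e bs) = length (replicate m 0)"
    by (simp add: zlincomb_def)
  fix i assume "i < length (zlincomb p m e bs)"
  then have i: "i < m"
    by (simp add: zlincomb_def)
  define B where "B j = bs ! j ! i" for j
  have "[(\<Sum>j<length bs. (e j + c' j) * B j) = (\<Sum>j<length bs. c j * B j)] (mod p)"
    by (intro cong_sum cong_mult e_cong cong_refl) simp
  also have "[(\<Sum>j<length bs. c j * B j) = (\<Sum>j<length bs. c' j * B j)] (mod p)"
    using arg_cong[OF eq, of "\<lambda>x. x ! i"] i by (simp add: zlincomb_def cong_def B_def)
  finally have "[(\<Sum>j<length bs. e j * B j) + (\<Sum>j<length bs. c' j * B j)
      = 0 + (\<Sum>j<length bs. c' j * B j)] (mod p)"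
    by (simp add: sum.distrib distrib_right)
  then have "[(\<Sum>j<length bs. e j * B j) = 0] (mod p)"
    by (simp only: cong_add_rcancel_nat)
  then show "zlincomb p m e bs ! i = replicate m 0 ! i"
    using i by (simp add: zlincomb_def cong_def B_def)
qed

lemma inj_on_zlincomb:
  assumes p: "p > 0" and indep: "zlin_indep p m bs"
  shows "inj_on (\<lambda>cs. zlincomb p m ((!) cs) bs) (zvecs p (length bs))"
proof (rule inj_onI)
  fix cs cs' assume cs: "cs \<in> zvecs p (length bs)" and cs': "cs' \<in> zvecs p (length bs)"
    and eq: "zlincomb p m ((!) cs) bs = zlincomb p m ((!) cs') bs"
  define e where "e j = (cs ! j + (p - cs' ! j)) mod p" for j
  have e_cong: "[e j + cs' ! j = cs ! j] (mod p)" if "j < length bs" for j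
  proof -
    have "cs ! j + (p - cs' ! j) + cs' ! j = cs ! j + p"
      using nth_zvecs[OF cs' that] by simp
    then show ?thesis
      by (simp add: e_def cong_def mod_add_left_eq)
  qed
  have "zlincomb p m e bs = replicate m 0"
    using eq e_cong by (rule zlincomb_eq_0_if_coeffs_diff)
  moreover have "\<forall>j<length bs. e j < p"
    using p by (simp add: e_def)
  ultimately have e0: "\<forall>j<length bs. e j = 0"
    using indep unfolding zlin_indep_def by blast
  show "cs = cs'"
  proof (rule nth_equalityI)
    show "length cs = length cs'"
      using cs cs' by (simp add: zvecs_def)
    fix j assume "j < length cs"
    then have j: "j < length bs"
      using cs by (simp add: zvecs_def)
    have "[cs ! j = cs' ! j] (mod p)"
      using cong_sym[OF e_cong[OF j]] e0 j by simp
    then show "cs ! j = cs' ! j"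
      using cong_less_modulus_unique_nat nth_zvecs[OF cs j] nth_zvecs[OF cs' j] by blast
  qed
qed

lemma card_zspan:
  "p > 0 \<Longrightarrow> zlin_indep p m bs \<Longrightarrow> card (zspan p m bs) = p ^ length bs"
  by (simp add: zspan_eq_image card_image inj_on_zlincomb card_zvecs)

lemma card_if_zdim_eq:
  assumes "p > 0" and "zdim_eq p m S d"
  shows "card S = p ^ d"
proof -
  obtain bs where "length bs = d" "zlin_indep p m bs" "S = zspan p m bs"
    using assms(2) by (auto simp: zdim_eq_def)
  then show ?thesis
    using card_zspan[OF assms(1)] by simp
qed

lemma ntrace_proj0_tensor_power:
  "ntrace p n (nmul p n (proj0 p n k S) (tensor_power n \<rho>))
    = (1 / of_nat p ^ (n - k)) * (\<Sum>\<chi>\<in>S. \<Prod>i<n. char_fun p \<rho> (\<chi> ! i) (\<chi> ! (n + i)))"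
proof -
  have "ntrace p n (nmul p n (proj0 p n k S) (tensor_power n \<rho>))
      = (\<Sum>a\<in>zvecs p n. \<Sum>c\<in>zvecs p n. \<Sum>\<chi>\<in>S. (1 / of_nat p ^ (n - k)) *
          (\<Prod>i<n. Dop p (\<chi> ! i) (\<chi> ! (n + i)) (a ! i) (c ! i) * \<rho> (c ! i) (a ! i)))"
    by (simp add: ntrace_def nmul_def proj0_def tensor_power_def Dn_def sum_distrib_left
        sum_distrib_right prod.distrib mult_ac)
  also have "\<dots> = (1 / of_nat p ^ (n - k)) * (\<Sum>\<chi>\<in>S. \<Sum>a\<in>zvecs p n. \<Sum>c\<in>zvecs p n.
          (\<Prod>i<n. Dop p (\<chi> ! i) (\<chi> ! (n + i)) (a ! i) (c ! i) * \<rho> (c ! i) (a ! i)))"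
    by (simp only: sum_rotate3 [of _ "zvecs p n"] sum_distrib_left)
  also have "\<dots> = (1 / of_nat p ^ (n - k)) * (\<Sum>\<chi>\<in>S. \<Prod>i<n. \<Sum>a<p. \<Sum>c<p.
          Dop p (\<chi> ! i) (\<chi> ! (n + i)) a c * \<rho> c a)"
  proof -
    have "(\<Sum>a\<in>zvecs p n. \<Sum>c\<in>zvecs p n.
          (\<Prod>i<n. Dop p (\<chi> ! i) (\<chi> ! (n + i)) (a ! i) (c ! i) * \<rho> (c ! i) (a ! i)))
        = (\<Prod>i<n. \<Sum>a<p. \<Sum>c<p. Dop p (\<chi> ! i) (\<chi> ! (n + i)) a c * \<rho> c a)" for \<chi>
      by (rule sum_zvecs_prod2[where f = "\<lambda>i a c. Dop p (\<chi> ! i) (\<chi> ! (n + i)) a c * \<rho> c a"])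
    then show ?thesis
      by simp
  qed
  also have "\<dots> = (1 / of_nat p ^ (n - k)) * (\<Sum>\<chi>\<in>S. \<Prod>i<n. char_fun p \<rho> (\<chi> ! i) (\<chi> ! (n + i)))"
    unfolding char_fun_def mtrace_def mmul_def by (subst (2) sum.swap) (simp add: mult.commute)
  finally show ?thesis .
qed

lemma weight_enum_sympl_perp:
  assumes p: "p > 0" and S: "zsubspace p (2 * n) S"
  shows "weight_enum n (sympl_perp p n S) y = (1 / of_nat (card S)) *
    (\<Sum>s\<in>S. \<Sum>x\<in>zvecs p (2 * n). ep p (sympl p n x s) * (\<Prod>i<n. y (x ! i) (x ! (n + i))))"
proof -
  have "finite S"
    using S finite_subset[OF _ finite_zvecs] by (auto simp: zsubspace_def)
  moreover have "replicate (2 * n) 0 \<in> S"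
    using S by (simp add: zsubspace_def)
  ultimately have card: "card S \<noteq> 0"
    by auto
  define W where "W x = (\<Prod>i<n. y (x ! i) (x ! (n + i)))" for x
  have "weight_enum n (sympl_perp p n S) y
      = (\<Sum>x\<in>zvecs p (2 * n). if \<forall>s\<in>S. sympl p n x s = 0 then W x else 0)"
    unfolding weight_enum_def sympl_perp_def W_def by (rule sum.inter_filter[OF finite_zvecs])
  also have "\<dots> = (\<Sum>x\<in>zvecs p (2 * n). (1 / of_nat (card S)) * (\<Sum>s\<in>S. ep p (sympl p n x s)) * W x)"
    by (intro sum.cong refl) (simp add: sum_ep_sympl_subspace[OF p S] card)
  also have "\<dots> = (\<Sum>x\<in>zvecs p (2 * n). \<Sum>s\<in>S. (1 / of_nat (card S)) * (ep p (sympl p n x s) * W x))"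
    by (simp add: sum_distrib_left sum_distrib_right mult_ac)
  also have "\<dots> = (1 / of_nat (card S)) * (\<Sum>s\<in>S. \<Sum>x\<in>zvecs p (2 * n). ep p (sympl p n x s) * W x)"
    by (subst sum.swap) (simp add: sum_distrib_left)
  finally show ?thesis
    by (simp add: W_def)
qed

lemma sum_ep_sympl_wigner:
  assumes p: "p > 0" and s: "s \<in> zvecs p (2 * n)"
  shows "(\<Sum>x\<in>zvecs p (2 * n). ep p (sympl p n x s) * (\<Prod>i<n. wigner p \<rho> (x ! i) (x ! (n + i))))
    = (\<Prod>i<n. char_fun p \<rho> (s ! i) (s ! (n + i)))"
proof -
  have "(\<Sum>x\<in>zvecs p (2 * n). ep p (sympl p n x s) * (\<Prod>i<n. wigner p \<rho> (x ! i) (x ! (n + i))))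
      = (\<Sum>u\<in>zvecs p n. \<Sum>v\<in>zvecs p n. \<Prod>i<n.
          ep p (int (u ! i) * int (s ! (n + i)) - int (s ! i) * int (v ! i)) * wigner p \<rho> (u ! i) (v ! i))"
    unfolding sum_zvecs_double
  proof (intro sum.cong refl)
    fix u v assume "u \<in> zvecs p n"
    then have "length u = n"
      by (simp add: zvecs_def)
    then show "ep p (sympl p n (u @ v) s) * (\<Prod>i<n. wigner p \<rho> ((u @ v) ! i) ((u @ v) ! (n + i)))
        = (\<Prod>i<n. ep p (int (u ! i) * int (s ! (n + i)) - int (s ! i) * int (v ! i)) * wigner p \<rho> (u ! i) (v ! i))"
      by (simp add: ep_sympl[OF p] prod.distrib nth_append)
  qed
  also have "\<dots> = (\<Prod>i<n. \<Sum>a<p. \<Sum>b<p.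
      ep p (int a * int (s ! (n + i)) - int (s ! i) * int b) * wigner p \<rho> a b)"
    by (rule sum_zvecs_prod2)
  also have "\<dots> = (\<Prod>i<n. char_fun p \<rho> (s ! i) (s ! (n + i)))"
    by (intro prod.cong refl sum_ep_wigner[OF p]) (use s nth_zvecs in auto)
  finally show ?thesis .
qed

theorem theorem1:
  fixes p n k :: nat and S :: "nat list set" and \<rho> :: op
  assumes "prime p" and "odd p"
    and "n \<ge> 1" and "k \<le> n"
    and "isotropic p n S" and "zdim_eq p (2 * n) S (n - k)"
    and "density p \<rho>"
  shows "ntrace p n (nmul p n (proj0 p n k S) (tensor_power n \<rho>))
           = weight_enum n (sympl_perp p n S) (wigner p \<rho>)"
proof -
  have p: "p > 0"
    using assms(1) prime_gt_0_nat by blast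
  have S: "zsubspace p (2 * n) S"
    using assms(5) by (simp add: isotropic_def)
  have "weight_enum n (sympl_perp p n S) (wigner p \<rho>)
      = (1 / of_nat (card S)) * (\<Sum>s\<in>S. \<Prod>i<n. char_fun p \<rho> (s ! i) (s ! (n + i)))"
    unfolding weight_enum_sympl_perp[OF p S]
    using S sum_ep_sympl_wigner[OF p] by (auto simp: zsubspace_def intro!: sum.cong)
  then show ?thesis
    unfolding ntrace_proj0_tensor_power card_if_zdim_eq[OF p assms(6)] by simp
qed

end
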